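(* Let $n\ge 3$, $q=\frac{2n}{n-2}$, $\kappa=\frac{n-1}{n}$. Identify $S^1$ with $[-\pi,\pi]$ with endpoints identified, and let $\lambda=-1$ on $(-\pi,0)$, $\lambda=1$ on $(0,\pi)$. Let $N$ be a smooth positive function on $S^1$, $\gamma_N=-\frac{\int_{S^1}\lambda N}{\int_{S^1}N}$, and $t,\eta,\mu\in\mathbb{R}$. For $d>0$ let $\psi_d$ be the unique positive solution in $W^{2,\infty}(S^1)$ of $$-2\kappa q\,d^{-2q/n}\psi_d''-2\eta^2d^{-2q}\psi_d^{-q-1}-\kappa(\mu d^{-q}+\gamma_N+\lambda)^2\psi_d^{-q-1}+\kappa(t+\lambda)^2\psi_d^{q-1}=0,$$ and let $\mathcal{F}(d)=\psi_d(0)$. Suppose $|t|\neq1$ and let $$M_\infty=\max\left[\left|\frac{1-\gamma_N}{1-t}\right|^{1/q},\left|\frac{1+\gamma_N}{1+t}\right|^{1/q}\right].$$ If $\eta=\mu=0$, then $\mathcal{F}(d)\le M_\infty$ for all $d>0$. Otherwise there is a constant $c>0$ such that $\mathcal{F}(d)\ge c\,d^{-1}$ for all sufficiently small $d>0$. *)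

theory Defs
  imports "HOL-Analysis.Analysis"
begin

text \<open>S^1 is identified with [-pi,pi] with endpoints identified; functions on S^1
  are rendered as 2pi-periodic functions on the real line.\<close>

definition periodic_2pi :: "(real \<Rightarrow> real) \<Rightarrow> bool" where
  "periodic_2pi f \<longleftrightarrow> (\<forall>x. f (x + 2 * pi) = f x)"

text \<open>lambda = -1 on (-pi,0), 1 on (0,pi) (extended periodically; the value at the two
  points 0, pi is irrelevant, set to 0).\<close>
definition lam :: "real \<Rightarrow> real" where
  "lam x = (if sin x < 0 then -1 else if sin x > 0 then 1 else 0)"

definition smooth_fun :: "(real \<Rightarrow> real) \<Rightarrow> bool" where
  "smooth_fun f \<longleftrightarrow> (\<forall>k x. (deriv ^^ k) f differentiable (at x))"

definition qexp :: "nat \<Rightarrow> real" where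
  "qexp n = 2 * real n / (real n - 2)"

definition kappa :: "nat \<Rightarrow> real" where
  "kappa n = (real n - 1) / real n"

definition gammaN :: "(real \<Rightarrow> real) \<Rightarrow> real" where
  "gammaN N = - (integral {-pi..pi} (\<lambda>x. lam x * N x) / integral {-pi..pi} N)"

text \<open>W^{2,infinity}: psi is differentiable with derivative psi1, psi1 is the
  indefinite integral of a bounded function psi2 (the weak second derivative).\<close>
definition pos_W2inf_sol ::
  "nat \<Rightarrow> real \<Rightarrow> real \<Rightarrow> real \<Rightarrow> real \<Rightarrow> real \<Rightarrow> (real \<Rightarrow> real) \<Rightarrow> bool" where
  "pos_W2inf_sol n gam t eta mu d \<psi> \<longleftrightarrow>
     periodic_2pi \<psi> \<and> (\<forall>x. \<psi> x > 0) \<and>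
     (\<exists>\<psi>1 \<psi>2.
        (\<forall>x. (\<psi> has_real_derivative \<psi>1 x) (at x)) \<and>
        (\<forall>a b. a \<le> b \<longrightarrow> (\<psi>2 has_integral (\<psi>1 b - \<psi>1 a)) {a..b}) \<and>
        bounded (range \<psi>2) \<and>
        (AE x in lborel.
           - 2 * kappa n * qexp n * d powr (- 2 * qexp n / real n) * \<psi>2 x
           - 2 * eta\<^sup>2 * d powr (- 2 * qexp n) * \<psi> x powr (- qexp n - 1)
           - kappa n * (mu * d powr (- qexp n) + gam + lam x)\<^sup>2 * \<psi> x powr (- qexp n - 1)
           + kappa n * (t + lam x)\<^sup>2 * \<psi> x powr (qexp n - 1) = 0))"

end

theory Submission
  imports Defs
begin

text \<open>
  Both bounds come from the maximum principle at a global extremum x0 of the periodic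
  solution psi = psi_d; near x0 we have lambda = +-1, since lambda jumps only at 0 and pi.
  Solved for psi'', the equation reads
    2 kappa q d^(-2q/n) psi'' = psi^(-q-1) (kappa (t+lambda)^2 psi^(2q) - 2 eta^2 d^(-2q)
                                           - kappa (mu d^(-q) + gamma_N + lambda)^2),
  and the bracket is increasing in psi. If it is at least some r > 0 wherever psi > m, then
  max psi <= m: otherwise psi'' >= eps > 0 a.e. just right of the maximum, where psi' = 0, so
  psi would increase there. Symmetrically, a negative upper bound wherever psi < m forces
  min psi >= m.

  For eta = mu = 0 the bracket is kappa ((t+lambda)^2 psi^(2q) - (gamma_N+lambda)^2), which is
  positive for psi > M_infinity. Otherwise d^(2q) times the bracket is
  kappa (t+lambda)^2 (d psi)^(2q) - (2 eta^2 + kappa (mu + d^q (gamma_N+lambda))^2), whose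
  subtracted term stays above some b > 0 as d -> 0; so the bracket is negative wherever
  d psi < c for small enough c > 0, whence psi >= c/d.
\<close>

lemma quarter_sq_le_sq_add:
  fixes mu e :: real
  assumes "\<bar>e\<bar> < \<bar>mu\<bar> / 2"
  shows "mu\<^sup>2 / 4 \<le> (mu + e)\<^sup>2"
proof -
  have "\<bar>mu\<bar> / 2 \<le> \<bar>mu + e\<bar>"
    using assms abs_triangle_ineq2[of mu "- e"] by auto
  then have "(\<bar>mu\<bar> / 2)\<^sup>2 \<le> \<bar>mu + e\<bar>\<^sup>2"
    by (rule power_mono) simp
  then show ?thesis
    by (simp add: power_divide)
qed

lemma sq_less_mult_powr_of_root_abs_less:
  fixes q m a b :: real
  assumes "q > 0" "m > 0" "b \<noteq> 0" "\<bar>a / b\<bar> powr (1 / q) < m"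
  shows "a\<^sup>2 < b\<^sup>2 * m powr (2 * q)"
proof -
  have "\<bar>a / b\<bar> = (\<bar>a / b\<bar> powr (1 / q)) powr q"
    using assms(1) by (simp add: powr_powr)
  also have "\<dots> < m powr q"
    by (rule powr_less_mono2) (use assms in auto)
  finally have "\<bar>a\<bar> < \<bar>b\<bar> * m powr q"
    using assms(3) by (simp add: divide_less_eq mult.commute)
  then have "\<bar>a\<bar>\<^sup>2 < (\<bar>b\<bar> * m powr q)\<^sup>2"
    by (rule power_strict_mono) auto
  moreover have "m powr (2 * q) = (m powr q)\<^sup>2"
    by (simp add: power2_eq_square powr_add[symmetric])
  ultimately show ?thesis
    by (simp add: power_mult_distrib)
qed

lemma powr_nonpos_mult_le:
  fixes p y m s S :: real
  assumes "p \<le> 0" "0 < y" "y \<le> m" "0 \<le> s" "s \<le> S"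
  shows "m powr p * s \<le> y powr p * S"
  using assms powr_mono2'[OF assms(1-3)] by (intro mult_mono) auto

lemma has_integral_ge_AE:
  fixes f :: "real \<Rightarrow> real"
  assumes int: "(f has_integral I) {a..b}" and "a \<le> b"
    and ae: "AE x in lborel. a < x \<and> x < b \<longrightarrow> e \<le> f x"
  shows "e * (b - a) \<le> I"
proof -
  have "AE x in lebesgue. a < x \<and> x < b \<longrightarrow> e \<le> f x"
    by (rule AE_completion[OF ae])
  then obtain S where "negligible S" and S: "{x. \<not> (a < x \<and> x < b \<longrightarrow> e \<le> f x)} \<subseteq> S"
    unfolding eventually_ae_filter_negligible by blast
  define g where "g x = (if x \<in> insert a (insert b S) then e else f x)" for x
  have "negligible (insert a (insert b S))"
    using \<open>negligible S\<close> by simp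
  then have "(g has_integral I) {a..b}"
    by (rule has_integral_spike[OF _ _ int]) (simp add: g_def)
  moreover have "((\<lambda>x. e) has_integral e * (b - a)) {a..b}"
    using has_integral_const_real[of e a b] \<open>a \<le> b\<close> by (simp add: mult.commute)
  moreover have "\<forall>x\<in>{a..b}. e \<le> g x"
    using S by (auto simp: g_def subset_iff order.order_iff_strict)
  ultimately show ?thesis
    by (metis has_integral_le)
qed

lemma no_local_max_if_second_deriv_pos:
  fixes f f' f'' :: "real \<Rightarrow> real"
  assumes der: "\<forall>x. (f has_real_derivative f' x) (at x)"
    and int: "\<forall>a b. a \<le> b \<longrightarrow> (f'' has_integral (f' b - f' a)) {a..b}"
    and max: "\<forall>\<^sub>F y in nhds x0. f y \<le> f x0"
    and right: "\<forall>\<^sub>F x in at_right x0. P x"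
    and ae: "AE x in lborel. P x \<longrightarrow> \<epsilon> \<le> f'' x" and "\<epsilon> > 0"
  shows False
proof -
  obtain r where "r > 0" and r: "\<And>y. dist y x0 < r \<Longrightarrow> f y \<le> f x0"
    using max unfolding eventually_nhds_metric by auto
  obtain b where "b > x0" and b: "\<And>y. x0 < y \<Longrightarrow> y < b \<Longrightarrow> P y"
    using right unfolding eventually_at_right_field by auto
  have "f' x0 = 0"
    using DERIV_local_max[OF der[rule_format] \<open>r > 0\<close>] r by (simp add: dist_real_def)
  define h where "h = min (b - x0) r / 2"
  have h: "0 < h" "x0 + h < b" "h < r"
    using \<open>r > 0\<close> \<open>b > x0\<close> by (auto simp: h_def min_def field_simps)
  have f'_pos: "f' s > 0" if "x0 < s" "s \<le> x0 + h" for s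
  proof -
    have "\<epsilon> * (s - x0) \<le> f' s - f' x0"
    proof (rule has_integral_ge_AE[OF int[rule_format]])
      show "x0 \<le> s" using that by simp
      show "AE x in lborel. x0 < x \<and> x < s \<longrightarrow> \<epsilon> \<le> f'' x"
        using ae by (rule eventually_mono) (use b h that in force)
    qed (use that in simp)
    moreover have "0 < \<epsilon> * (s - x0)"
      using \<open>\<epsilon> > 0\<close> that by simp
    ultimately show ?thesis
      using \<open>f' x0 = 0\<close> by linarith
  qed
  obtain \<xi> where \<xi>: "x0 < \<xi>" "\<xi> < x0 + h" and mvt: "f (x0 + h) - f x0 = h * f' \<xi>"
    using MVT2[of x0 "x0 + h" f f'] der h(1) by auto
  have "f x0 < f (x0 + h)"
    using mult_pos_pos[OF h(1) f'_pos[OF \<xi>(1) less_imp_le[OF \<xi>(2)]]] mvt by simp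
  moreover have "f (x0 + h) \<le> f x0"
    using r h by (simp add: dist_real_def)
  ultimately show False by simp
qed

lemma no_local_min_if_second_deriv_neg:
  fixes f f' f'' :: "real \<Rightarrow> real"
  assumes der: "\<forall>x. (f has_real_derivative f' x) (at x)"
    and int: "\<forall>a b. a \<le> b \<longrightarrow> (f'' has_integral (f' b - f' a)) {a..b}"
    and min: "\<forall>\<^sub>F y in nhds x0. f x0 \<le> f y"
    and right: "\<forall>\<^sub>F x in at_right x0. P x"
    and ae: "AE x in lborel. P x \<longrightarrow> f'' x \<le> - \<epsilon>" and "\<epsilon> > 0"
  shows False
proof -
  have "\<forall>x. ((\<lambda>x. - f x) has_real_derivative - f' x) (at x)"
    using der by (simp add: DERIV_minus)
  moreover have "\<forall>a b. a \<le> b \<longrightarrow> ((\<lambda>x. - f'' x) has_integral (- f' b - - f' a)) {a..b}"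
  proof (intro allI impI)
    fix a b :: real assume "a \<le> b"
    then have "((\<lambda>x. - f'' x) has_integral - (f' b - f' a)) {a..b}"
      using int has_integral_neg[of f'' "f' b - f' a" "{a..b}"] by simp
    then show "((\<lambda>x. - f'' x) has_integral (- f' b - - f' a)) {a..b}"
      by simp
  qed
  moreover have "\<forall>\<^sub>F y in nhds x0. - f y \<le> - f x0"
    using min by (rule eventually_mono) simp
  moreover have "AE x in lborel. P x \<longrightarrow> \<epsilon> \<le> - f'' x"
    using ae by (rule eventually_mono) auto
  ultimately show False
    by (rule no_local_max_if_second_deriv_pos[OF _ _ _ right _ \<open>\<epsilon> > 0\<close>])
qed

lemma periodic_2pi_add_nat:
  assumes "periodic_2pi f"
  shows "f (x + 2 * pi * real k) = f x"
proof (induction k)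
  case (Suc k)
  have "f (x + 2 * pi * real (Suc k)) = f (x + 2 * pi * real k + 2 * pi)"
    by (simp add: algebra_simps)
  also have "\<dots> = f x"
    using assms Suc by (simp add: periodic_2pi_def)
  finally show ?case .
qed simp

lemma periodic_2pi_add_int:
  assumes "periodic_2pi f"
  shows "f (x + 2 * pi * of_int k) = f x"
proof (cases k)
  case (nonneg m)
  then show ?thesis using periodic_2pi_add_nat[OF assms] by simp
next
  case (neg m)
  have "x + 2 * pi * of_int k + 2 * pi * real (Suc m) = x"
    unfolding neg by (simp add: algebra_simps)
  then show ?thesis
    using periodic_2pi_add_nat[OF assms, of "x + 2 * pi * of_int k" "Suc m"] by metis
qed

lemma periodic_2pi_range:
  assumes "periodic_2pi f"
  shows "range f = f ` {-pi..pi}"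
proof -
  have "f y \<in> f ` {-pi..pi}" for y
  proof -
    define k where "k = \<lfloor>(y + pi) / (2 * pi)\<rfloor>"
    have "of_int k \<le> (y + pi) / (2 * pi)" "(y + pi) / (2 * pi) < of_int k + 1"
      unfolding k_def by linarith+
    then have "y - 2 * pi * of_int k \<in> {-pi..pi}"
      by (auto simp: field_simps)
    moreover have "f y = f (y - 2 * pi * of_int k)"
      using periodic_2pi_add_int[OF assms, of "y - 2 * pi * of_int k" k] by simp
    ultimately show ?thesis by blast
  qed
  then show ?thesis by auto
qed

lemma periodic_2pi_attains_max:
  assumes "periodic_2pi f" and "\<And>x. isCont f x"
  obtains x0 where "\<And>y. f y \<le> f x0"
proof -
  have "continuous_on {-pi..pi} f"
    using assms(2) by (simp add: continuous_at_imp_continuous_on)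
  moreover have "{-pi..pi} \<noteq> {}"
    using pi_ge_zero by simp
  ultimately obtain x0 where x0: "\<forall>y\<in>{-pi..pi}. f y \<le> f x0"
    using continuous_attains_sup[OF compact_Icc] by blast
  show ?thesis
  proof (rule that)
    fix y
    have "f y \<in> f ` {-pi..pi}"
      using periodic_2pi_range[OF assms(1)] by blast
    then show "f y \<le> f x0"
      using x0 by auto
  qed
qed

lemma periodic_2pi_attains_min:
  assumes "periodic_2pi f" and "\<And>x. isCont f x"
  obtains x0 where "\<And>y. f x0 \<le> f y"
proof -
  have "continuous_on {-pi..pi} f"
    using assms(2) by (simp add: continuous_at_imp_continuous_on)
  moreover have "{-pi..pi} \<noteq> {}"
    using pi_ge_zero by simp
  ultimately obtain x0 where x0: "\<forall>y\<in>{-pi..pi}. f x0 \<le> f y"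
    using continuous_attains_inf[OF compact_Icc] by blast
  show ?thesis
  proof (rule that)
    fix y
    have "f y \<in> f ` {-pi..pi}"
      using periodic_2pi_range[OF assms(1)] by blast
    then show "f x0 \<le> f y"
      using x0 by auto
  qed
qed

lemma eventually_sin_nonzero: "\<forall>\<^sub>F x in at (x0::real). sin x \<noteq> 0"
proof (cases "sin x0 = 0")
  case False
  then show ?thesis
    by (intro tendsto_imp_eventually_ne[OF isCont_sin[of x0, unfolded isCont_def]])
next
  case True
  then obtain i :: int where i: "x0 = of_int i * pi"
    by (auto simp: sin_zero_iff_int2)
  show ?thesis unfolding eventually_at
  proof (intro exI[of _ pi] conjI ballI impI pi_gt_zero)
    fix x :: real assume x: "x \<noteq> x0 \<and> dist x x0 < pi"
    show "sin x \<noteq> 0"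
    proof
      assume "sin x = 0"
      then obtain j :: int where j: "x = of_int j * pi"
        by (auto simp: sin_zero_iff_int2)
      have "x - x0 = of_int (j - i) * pi"
        by (simp add: i j left_diff_distrib)
      then have "\<bar>of_int (j - i)\<bar> * pi < 1 * pi"
        using x by (simp add: dist_real_def abs_mult)
      then have "\<bar>j - i\<bar> < 1"
        using pi_gt_zero mult_less_cancel_right_pos by fastforce
      then have "j = i" by simp
      then show False using x i j by simp
    qed
  qed
qed

lemma eventually_lam_sign: "\<forall>\<^sub>F x in at (x0::real). lam x \<in> {-1, 1}"
  using eventually_sin_nonzero by (rule eventually_mono) (auto simp: lam_def)

definition ode_rhs :: "nat \<Rightarrow> real \<Rightarrow> real \<Rightarrow> real \<Rightarrow> real \<Rightarrow> real \<Rightarrow> real \<Rightarrow> real \<Rightarrow> real" where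
  "ode_rhs n gam t eta mu d l y =
     kappa n * (t + l)\<^sup>2 * y powr (2 * qexp n) - 2 * eta\<^sup>2 * d powr (- 2 * qexp n)
       - kappa n * (mu * d powr (- qexp n) + gam + l)\<^sup>2"

lemma pos_W2inf_solE:
  assumes "pos_W2inf_sol n gam t eta mu d \<psi>"
  obtains \<psi>1 \<psi>2 where "\<And>x. \<psi> x > 0" and "periodic_2pi \<psi>"
    and "\<forall>x. (\<psi> has_real_derivative \<psi>1 x) (at x)"
    and "\<forall>a b. a \<le> b \<longrightarrow> (\<psi>2 has_integral (\<psi>1 b - \<psi>1 a)) {a..b}"
    and "AE x in lborel. 2 * kappa n * qexp n * d powr (- 2 * qexp n / real n) * \<psi>2 x
           = \<psi> x powr (- qexp n - 1) * ode_rhs n gam t eta mu d (lam x) (\<psi> x)"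
proof -
  obtain \<psi>1 \<psi>2 where pos: "\<forall>x. \<psi> x > 0" and per: "periodic_2pi \<psi>"
    and der: "\<forall>x. (\<psi> has_real_derivative \<psi>1 x) (at x)"
    and int: "\<forall>a b. a \<le> b \<longrightarrow> (\<psi>2 has_integral (\<psi>1 b - \<psi>1 a)) {a..b}"
    and eq: "AE x in lborel.
           - 2 * kappa n * qexp n * d powr (- 2 * qexp n / real n) * \<psi>2 x
           - 2 * eta\<^sup>2 * d powr (- 2 * qexp n) * \<psi> x powr (- qexp n - 1)
           - kappa n * (mu * d powr (- qexp n) + gam + lam x)\<^sup>2 * \<psi> x powr (- qexp n - 1)
           + kappa n * (t + lam x)\<^sup>2 * \<psi> x powr (qexp n - 1) = 0"
    using assms unfolding pos_W2inf_sol_def by blast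
  have split: "y powr (qexp n - 1) = y powr (- qexp n - 1) * y powr (2 * qexp n)"
    if "y > 0" for y :: real
    using that by (simp add: powr_add[symmetric])
  have "AE x in lborel. 2 * kappa n * qexp n * d powr (- 2 * qexp n / real n) * \<psi>2 x
           = \<psi> x powr (- qexp n - 1) * ode_rhs n gam t eta mu d (lam x) (\<psi> x)"
    using eq by (rule eventually_mono)
      (simp add: split[OF pos[rule_format]] ode_rhs_def algebra_simps)
  then show ?thesis
    using that pos per der int by blast
qed

lemma qexp_pos: "n \<ge> 3 \<Longrightarrow> qexp n > 0"
  by (simp add: qexp_def)

lemma kappa_pos: "n \<ge> 3 \<Longrightarrow> kappa n > 0"
  by (simp add: kappa_def)

lemma ode_rhs_mono:
  assumes "n \<ge> 3" "0 \<le> y" "y \<le> z"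
  shows "ode_rhs n gam t eta mu d l y \<le> ode_rhs n gam t eta mu d l z"
proof -
  have "y powr (2 * qexp n) \<le> z powr (2 * qexp n)"
    using assms qexp_pos[OF assms(1)] by (intro powr_mono2) auto
  then show ?thesis
    using kappa_pos[OF assms(1)] unfolding ode_rhs_def by (simp add: mult_left_mono)
qed

lemma ode_rhs_eta_mu_zero:
  "ode_rhs n gam t 0 0 d l y = kappa n * ((t + l)\<^sup>2 * y powr (2 * qexp n) - (gam + l)\<^sup>2)"
  by (simp add: ode_rhs_def algebra_simps)

lemma ode_rhs_scaled:
  assumes "d > 0" "y \<ge> 0"
  shows "d powr (2 * qexp n) * ode_rhs n gam t eta mu d l y
         = kappa n * (t + l)\<^sup>2 * (d * y) powr (2 * qexp n)
           - (2 * eta\<^sup>2 + kappa n * (mu + d powr qexp n * (gam + l))\<^sup>2)"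
proof -
  define q where "q = qexp n"
  have "d powr (2 * q) * d powr (- 2 * q) = 1"
    using assms by (simp add: powr_add[symmetric])
  moreover have "d powr (2 * q) * (mu * d powr (- q) + gam + l)\<^sup>2 = (mu + d powr q * (gam + l))\<^sup>2"
  proof -
    have "d powr (2 * q) = (d powr q)\<^sup>2"
      by (simp add: power2_eq_square powr_add[symmetric])
    moreover have "d powr q * (mu * d powr (- q) + gam + l) = mu + d powr q * (gam + l)"
      using assms by (simp add: powr_minus field_simps)
    ultimately show ?thesis
      by (metis power_mult_distrib)
  qed
  moreover have "(d * y) powr (2 * q) = d powr (2 * q) * y powr (2 * q)"
    using assms by (simp add: powr_mult)
  ultimately show ?thesis
    unfolding ode_rhs_def q_def[symmetric] by (simp add: algebra_simps)
qed

lemma pos_W2inf_sol_le_of_ode_rhs_pos: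
  assumes n: "n \<ge> 3" and d: "d > 0" and sol: "pos_W2inf_sol n gam t eta mu d \<psi>"
    and "r > 0" and rhs: "\<And>l y. l \<in> {-1, 1} \<Longrightarrow> m < y \<Longrightarrow> r \<le> ode_rhs n gam t eta mu d l y"
  shows "\<psi> x \<le> m"
proof (rule ccontr)
  assume "\<not> \<psi> x \<le> m"
  define q where "q = qexp n"
  define K where "K = 2 * kappa n * q * d powr (- 2 * q / real n)"
  have "q > 0" "K > 0"
    using d qexp_pos[OF n] kappa_pos[OF n] by (simp_all add: K_def q_def)
  obtain \<psi>1 \<psi>2 where pos: "\<And>x. \<psi> x > 0" and per: "periodic_2pi \<psi>"
    and der: "\<forall>x. (\<psi> has_real_derivative \<psi>1 x) (at x)"
    and int: "\<forall>a b. a \<le> b \<longrightarrow> (\<psi>2 has_integral (\<psi>1 b - \<psi>1 a)) {a..b}"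
    and eq: "AE x in lborel. K * \<psi>2 x = \<psi> x powr (- q - 1) * ode_rhs n gam t eta mu d (lam x) (\<psi> x)"
    using pos_W2inf_solE[OF sol] unfolding K_def q_def by blast
  obtain x0 where max: "\<And>y. \<psi> y \<le> \<psi> x0"
    using periodic_2pi_attains_max[OF per DERIV_isCont[OF der[rule_format]]] by blast
  have "m < \<psi> x0"
    using max[of x] \<open>\<not> \<psi> x \<le> m\<close> by simp
  define \<epsilon> where "\<epsilon> = \<psi> x0 powr (- q - 1) * r / K"
  have "\<epsilon> > 0"
    using pos[of x0] \<open>r > 0\<close> \<open>K > 0\<close> by (simp add: \<epsilon>_def)
  have "\<forall>\<^sub>F y in at x0. m < \<psi> y \<and> lam y \<in> {-1, 1}"
    using order_tendstoD(1)[OF DERIV_isCont[OF der[rule_format], unfolded isCont_def] \<open>m < \<psi> x0\<close>]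
      eventually_lam_sign by (rule eventually_conj)
  then have right: "\<forall>\<^sub>F y in at_right x0. m < \<psi> y \<and> lam y \<in> {-1, 1}"
    by (simp add: eventually_at_split)
  have "AE y in lborel. m < \<psi> y \<and> lam y \<in> {-1, 1} \<longrightarrow> \<epsilon> \<le> \<psi>2 y"
    using eq
  proof (rule eventually_mono, intro impI)
    fix y assume eq_y: "K * \<psi>2 y = \<psi> y powr (- q - 1) * ode_rhs n gam t eta mu d (lam y) (\<psi> y)"
      and y: "m < \<psi> y \<and> lam y \<in> {-1, 1}"
    have "\<psi> x0 powr (- q - 1) * r \<le> \<psi> y powr (- q - 1) * ode_rhs n gam t eta mu d (lam y) (\<psi> y)"
      using y rhs \<open>r > 0\<close> \<open>q > 0\<close> by (intro powr_nonpos_mult_le[OF _ pos max]) auto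
    then show "\<epsilon> \<le> \<psi>2 y"
      using eq_y \<open>K > 0\<close> by (simp add: \<epsilon>_def divide_le_eq mult.commute)
  qed
  then show False
    using no_local_max_if_second_deriv_pos[OF der int _ right _ \<open>\<epsilon> > 0\<close>] max
    by (simp add: always_eventually)
qed

lemma pos_W2inf_sol_ge_of_ode_rhs_neg:
  assumes n: "n \<ge> 3" and d: "d > 0" and sol: "pos_W2inf_sol n gam t eta mu d \<psi>"
    and "r > 0"
    and rhs: "\<And>l y. l \<in> {-1, 1} \<Longrightarrow> 0 < y \<Longrightarrow> y < m \<Longrightarrow> ode_rhs n gam t eta mu d l y \<le> - r"
  shows "m \<le> \<psi> x"
proof (rule ccontr)
  assume "\<not> m \<le> \<psi> x"
  define q where "q = qexp n"
  define K where "K = 2 * kappa n * q * d powr (- 2 * q / real n)"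
  have "q > 0" "K > 0"
    using d qexp_pos[OF n] kappa_pos[OF n] by (simp_all add: K_def q_def)
  obtain \<psi>1 \<psi>2 where pos: "\<And>x. \<psi> x > 0" and per: "periodic_2pi \<psi>"
    and der: "\<forall>x. (\<psi> has_real_derivative \<psi>1 x) (at x)"
    and int: "\<forall>a b. a \<le> b \<longrightarrow> (\<psi>2 has_integral (\<psi>1 b - \<psi>1 a)) {a..b}"
    and eq: "AE x in lborel. K * \<psi>2 x = \<psi> x powr (- q - 1) * ode_rhs n gam t eta mu d (lam x) (\<psi> x)"
    using pos_W2inf_solE[OF sol] unfolding K_def q_def by blast
  obtain x0 where min: "\<And>y. \<psi> x0 \<le> \<psi> y"
    using periodic_2pi_attains_min[OF per DERIV_isCont[OF der[rule_format]]] by blast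
  have "\<psi> x0 < m"
    using min[of x] \<open>\<not> m \<le> \<psi> x\<close> by simp
  define \<epsilon> where "\<epsilon> = m powr (- q - 1) * r / K"
  have "\<epsilon> > 0"
    using pos[of x0] \<open>\<psi> x0 < m\<close> \<open>r > 0\<close> \<open>K > 0\<close> by (simp add: \<epsilon>_def)
  have "\<forall>\<^sub>F y in at x0. \<psi> y < m \<and> lam y \<in> {-1, 1}"
    using order_tendstoD(2)[OF DERIV_isCont[OF der[rule_format], unfolded isCont_def] \<open>\<psi> x0 < m\<close>]
      eventually_lam_sign by (rule eventually_conj)
  then have right: "\<forall>\<^sub>F y in at_right x0. \<psi> y < m \<and> lam y \<in> {-1, 1}"
    by (simp add: eventually_at_split)
  have "AE y in lborel. \<psi> y < m \<and> lam y \<in> {-1, 1} \<longrightarrow> \<psi>2 y \<le> - \<epsilon>"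
    using eq
  proof (rule eventually_mono, intro impI)
    fix y assume eq_y: "K * \<psi>2 y = \<psi> y powr (- q - 1) * ode_rhs n gam t eta mu d (lam y) (\<psi> y)"
      and y: "\<psi> y < m \<and> lam y \<in> {-1, 1}"
    have "m powr (- q - 1) * r \<le> \<psi> y powr (- q - 1) * - ode_rhs n gam t eta mu d (lam y) (\<psi> y)"
      using y rhs[of "lam y" "\<psi> y"] pos[of y] \<open>r > 0\<close> \<open>q > 0\<close>
      by (intro powr_nonpos_mult_le[OF _ pos]) auto
    then have "K * \<psi>2 y \<le> - (m powr (- q - 1) * r)"
      using eq_y by simp
    then show "\<psi>2 y \<le> - \<epsilon>"
      using \<open>K > 0\<close> by (simp add: \<epsilon>_def field_simps)
  qed
  then show False
    using no_local_min_if_second_deriv_neg[OF der int _ right _ \<open>\<epsilon> > 0\<close>] min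
    by (simp add: always_eventually)
qed

lemma pos_W2inf_sol_le_of_eta_mu_zero:
  assumes n: "n \<ge> 3" and d: "d > 0" and sol: "pos_W2inf_sol n gam t 0 0 d \<psi>"
    and M: "\<And>l. l \<in> {-1, 1} \<Longrightarrow> t + l \<noteq> 0 \<and> \<bar>(gam + l) / (t + l)\<bar> powr (1 / qexp n) \<le> M"
  shows "\<psi> x \<le> M"
proof (rule dense_ge)
  fix m :: real
  assume "M < m"
  moreover have "0 \<le> M"
    using M[of 1] by (meson insertCI order_trans powr_ge_zero)
  ultimately have "m > 0" by simp
  define c where "c l = (t + l)\<^sup>2 * m powr (2 * qexp n) - (gam + l)\<^sup>2" for l
  have c_pos: "c l > 0" if "l \<in> {-1, 1}" for l
    using sq_less_mult_powr_of_root_abs_less[OF qexp_pos[OF n] \<open>m > 0\<close>, of "t + l" "gam + l"]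
      M[OF that] \<open>M < m\<close> by (simp add: c_def)
  show "\<psi> x \<le> m"
  proof (rule pos_W2inf_sol_le_of_ode_rhs_pos[OF n d sol])
    show "kappa n * min (c (-1)) (c 1) > 0"
      using kappa_pos[OF n] c_pos by simp
    fix l y :: real
    assume "l \<in> {-1, 1}" and "m < y"
    then have "kappa n * min (c (-1)) (c 1) \<le> kappa n * c l"
      using kappa_pos[OF n] by (auto intro: mult_left_mono)
    also have "\<dots> = ode_rhs n gam t 0 0 d l m"
      by (simp add: ode_rhs_eta_mu_zero c_def)
    also have "\<dots> \<le> ode_rhs n gam t 0 0 d l y"
      using n \<open>m > 0\<close> \<open>m < y\<close> by (intro ode_rhs_mono) auto
    finally show "kappa n * min (c (-1)) (c 1) \<le> ode_rhs n gam t 0 0 d l y" .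
  qed
qed

lemma pos_W2inf_sol_ge:
  assumes n: "n \<ge> 3" and d: "d > 0" and sol: "pos_W2inf_sol n gam t eta mu d \<psi>"
    and "c > 0"
    and small: "\<And>l. l \<in> {-1, 1} \<Longrightarrow> kappa n * (t + l)\<^sup>2 * c powr (2 * qexp n) < b"
    and forcing: "\<And>l. l \<in> {-1, 1} \<Longrightarrow> b \<le> 2 * eta\<^sup>2 + kappa n * (mu + d powr qexp n * (gam + l))\<^sup>2"
  shows "c / d \<le> \<psi> x"
proof -
  define e where "e l = b - kappa n * (t + l)\<^sup>2 * c powr (2 * qexp n)" for l
  define D where "D = d powr (2 * qexp n)"
  have e_pos: "e l > 0" if "l \<in> {-1, 1}" for l
    using small[OF that] by (simp add: e_def)
  have "D > 0"
    using d by (simp add: D_def)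
  show ?thesis
  proof (rule pos_W2inf_sol_ge_of_ode_rhs_neg[OF n d sol])
    show "min (e (-1)) (e 1) / D > 0"
      using e_pos \<open>D > 0\<close> by simp
    fix l y :: real
    assume l: "l \<in> {-1, 1}" and "0 < y" "y < c / d"
    have "D * ode_rhs n gam t eta mu d l (c / d) \<le> - e l"
      using forcing[OF l] d \<open>c > 0\<close> by (simp add: D_def ode_rhs_scaled e_def)
    moreover have "min (e (-1)) (e 1) \<le> e l"
      using l by auto
    ultimately have "ode_rhs n gam t eta mu d l (c / d) \<le> - (min (e (-1)) (e 1) / D)"
      using \<open>D > 0\<close> by (simp add: field_simps)
    moreover have "ode_rhs n gam t eta mu d l y \<le> ode_rhs n gam t eta mu d l (c / d)"
      using n \<open>0 < y\<close> \<open>y < c / d\<close> by (intro ode_rhs_mono) auto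
    ultimately show "ode_rhs n gam t eta mu d l y \<le> - (min (e (-1)) (e 1) / D)"
      by linarith
  qed
qed

lemma eventually_forcing_term_ge:
  fixes k q eta mu gam :: real
  assumes "k > 0" "q > 0" "\<not> (eta = 0 \<and> mu = 0)"
  obtains b where "b > 0"
    and "\<forall>\<^sub>F d in at_right 0. \<forall>l\<in>{-1, 1}. b \<le> 2 * eta\<^sup>2 + k * (mu + d powr q * (gam + l))\<^sup>2"
proof (cases "mu = 0")
  case True
  then have "2 * eta\<^sup>2 > 0"
    using assms(3) by simp
  then show ?thesis
    using assms(1) by (intro that[of "2 * eta\<^sup>2"] always_eventually) auto
next
  case False
  have "((\<lambda>d. d powr q) \<longlongrightarrow> 0) (at_right 0)"
    using assms(2) by (intro tendsto_zero_powrI) (auto simp: eventually_at_right_less less_imp_le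
        intro: eventually_mono[OF eventually_at_right_less])
  then have "((\<lambda>d. d powr q * (\<bar>gam\<bar> + 1)) \<longlongrightarrow> 0) (at_right 0)"
    by (rule tendsto_mult_left_zero)
  then have small: "\<forall>\<^sub>F d in at_right 0. d powr q * (\<bar>gam\<bar> + 1) < \<bar>mu\<bar> / 2"
    using False by (intro order_tendstoD(2)) auto
  show ?thesis
  proof (rule that)
    show "k * mu\<^sup>2 / 4 > 0"
      using assms(1) False by simp
    show "\<forall>\<^sub>F d in at_right 0. \<forall>l\<in>{-1, 1}. k * mu\<^sup>2 / 4 \<le> 2 * eta\<^sup>2 + k * (mu + d powr q * (gam + l))\<^sup>2"
      using small
    proof (rule eventually_mono, intro ballI)
      fix d l :: real
      assume d: "d powr q * (\<bar>gam\<bar> + 1) < \<bar>mu\<bar> / 2" and l: "l \<in> {-1, 1}"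
      have "\<bar>d powr q * (gam + l)\<bar> \<le> d powr q * (\<bar>gam\<bar> + 1)"
        using l by (auto simp: abs_mult intro!: mult_left_mono)
      then have "mu\<^sup>2 / 4 \<le> (mu + d powr q * (gam + l))\<^sup>2"
        using d by (intro quarter_sq_le_sq_add) simp
      then show "k * mu\<^sup>2 / 4 \<le> 2 * eta\<^sup>2 + k * (mu + d powr q * (gam + l))\<^sup>2"
        using assms(1) mult_left_mono[of "mu\<^sup>2 / 4" _ k] by (simp add: add_increasing)
    qed
  qed
qed

lemma pos_W2inf_sol_lower_bound:
  assumes n: "n \<ge> 3" and eta_mu: "\<not> (eta = 0 \<and> mu = 0)"
  shows "\<exists>c>0. \<forall>\<^sub>F d in at_right 0.
           \<forall>\<psi>. pos_W2inf_sol n gam t eta mu d \<psi> \<longrightarrow> (\<forall>x. c / d \<le> \<psi> x)"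
proof -
  define q k where "q = qexp n" and "k = kappa n"
  have "q > 0" "k > 0"
    using qexp_pos[OF n] kappa_pos[OF n] by (simp_all add: q_def k_def)
  obtain b where "b > 0"
    and forcing: "\<forall>\<^sub>F d in at_right 0. \<forall>l\<in>{-1, 1}. b \<le> 2 * eta\<^sup>2 + k * (mu + d powr q * (gam + l))\<^sup>2"
    using eventually_forcing_term_ge[OF \<open>k > 0\<close> \<open>q > 0\<close> eta_mu] by blast
  define T where "T = max ((t - 1)\<^sup>2) ((t + 1)\<^sup>2)"
  have "T > 0"
    by (cases "t = 1") (auto simp: T_def less_max_iff_disj)
  define c where "c = (b / (2 * k * T)) powr (1 / (2 * q))"
  have "c > 0"
    using \<open>b > 0\<close> \<open>k > 0\<close> \<open>T > 0\<close> by (simp add: c_def)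
  have c_powr: "c powr (2 * q) = b / (2 * k * T)"
    using \<open>b > 0\<close> \<open>k > 0\<close> \<open>T > 0\<close> \<open>q > 0\<close> by (simp add: c_def powr_powr)
  have small: "k * (t + l)\<^sup>2 * c powr (2 * q) < b" if "l \<in> {-1, 1}" for l
  proof -
    have "k * (t + l)\<^sup>2 * c powr (2 * q) \<le> k * T * c powr (2 * q)"
      using that \<open>k > 0\<close> by (intro mult_right_mono mult_left_mono) (auto simp: T_def)
    also have "\<dots> = b / 2"
      using \<open>k > 0\<close> \<open>T > 0\<close> by (simp add: c_powr)
    finally show ?thesis
      using \<open>b > 0\<close> by simp
  qed
  show ?thesis
  proof (intro exI[of _ c] conjI \<open>c > 0\<close>)
    show "\<forall>\<^sub>F d in at_right 0. \<forall>\<psi>. pos_W2inf_sol n gam t eta mu d \<psi> \<longrightarrow> (\<forall>x. c / d \<le> \<psi> x)"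
      using forcing eventually_at_right_less
    proof eventually_elim
      case (elim d)
      then show ?case
        using pos_W2inf_sol_ge[OF n _ _ \<open>c > 0\<close>, of d gam t eta mu _ b] small
        unfolding q_def k_def by blast
    qed
  qed
qed

(* Only the number gammaN N enters the equation. *)
theorem lemma3p14:
  fixes n :: nat and N :: "real \<Rightarrow> real" and t eta mu :: real
    and \<psi> :: "real \<Rightarrow> real \<Rightarrow> real"
  assumes n3: "n \<ge> 3"
    and N_smooth: "smooth_fun N" and N_per: "periodic_2pi N" and N_pos: "\<forall>x. N x > 0"
    and sol: "\<forall>d>0. pos_W2inf_sol n (gammaN N) t eta mu d (\<psi> d)"
    and t1: "\<bar>t\<bar> \<noteq> 1"
  shows "(eta = 0 \<and> mu = 0 \<longrightarrow>
           (\<forall>d>0. \<psi> d 0 \<le> max (\<bar>(1 - gammaN N) / (1 - t)\<bar> powr (1 / qexp n))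
                                  (\<bar>(1 + gammaN N) / (1 + t)\<bar> powr (1 / qexp n))))
       \<and> (\<not> (eta = 0 \<and> mu = 0) \<longrightarrow>
           (\<exists>c>0. \<forall>\<^sub>F d in at_right 0. \<psi> d 0 \<ge> c / d))"
proof (intro conjI impI allI)
  fix d :: real
  assume "eta = 0 \<and> mu = 0" and "d > 0"
  then have "pos_W2inf_sol n (gammaN N) t 0 0 d (\<psi> d)"
    using sol by simp
  then show "\<psi> d 0 \<le> max (\<bar>(1 - gammaN N) / (1 - t)\<bar> powr (1 / qexp n))
                                (\<bar>(1 + gammaN N) / (1 + t)\<bar> powr (1 / qexp n))"
  proof (rule pos_W2inf_sol_le_of_eta_mu_zero[OF n3 \<open>d > 0\<close>])
    fix l :: real
    assume "l \<in> {-1, 1}"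
    then show "t + l \<noteq> 0 \<and> \<bar>(gammaN N + l) / (t + l)\<bar> powr (1 / qexp n)
        \<le> max (\<bar>(1 - gammaN N) / (1 - t)\<bar> powr (1 / qexp n))
              (\<bar>(1 + gammaN N) / (1 + t)\<bar> powr (1 / qexp n))"
      using t1 by (auto simp: add.commute abs_minus_commute)
  qed
next
  assume "\<not> (eta = 0 \<and> mu = 0)"
  then obtain c where "c > 0" and bound: "\<forall>\<^sub>F d in at_right 0.
      \<forall>\<phi>. pos_W2inf_sol n (gammaN N) t eta mu d \<phi> \<longrightarrow> (\<forall>x. c / d \<le> \<phi> x)"
    using pos_W2inf_sol_lower_bound[OF n3] by blast
  have "\<forall>\<^sub>F d in at_right 0. c / d \<le> \<psi> d 0"
    using bound eventually_at_right_less by eventually_elim (simp add: sol)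
  then show "\<exists>c>0. \<forall>\<^sub>F d in at_right 0. \<psi> d 0 \<ge> c / d"
    using \<open>c > 0\<close> by auto
qed

end
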